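(* Let $\chi$ be a separable metric space with a $\sigma$-finite Borel measure $\Lambda$ of full support. Let $(f_n)_{n\ge1}\subseteq L^\infty(\Lambda)$ converge in $L^\infty(\Lambda)$ to $f$, and suppose each $f_n$ has a version $u_n$ that is bounded, non-negative and lower semicontinuous. Then $f$ has a bounded, non-negative, lower semicontinuous version $u$ which is maximal: every bounded, non-negative, lower semicontinuous version $\tilde u$ of $f$ satisfies $\tilde u(x)\le u(x)$ for all $x\in\chi$.
   Context: A version of an element of $L^\infty(\Lambda)$ is a Borel function agreeing with it $\Lambda$-almost everywhere. *)

theory Defs
  imports "HOL-Analysis.Analysis" "HOL-Probability.Essential_Supremum"
begin

definition lower_semicontinuous :: "('a::topological_space \<Rightarrow> real) \<Rightarrow> bool" where
  "lower_semicontinuous u \<longleftrightarrow> (\<forall>c. open {x. c < u x})"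

definition Linfty :: "'a measure \<Rightarrow> ('a \<Rightarrow> real) \<Rightarrow> bool" where
  "Linfty M f \<longleftrightarrow> f \<in> borel_measurable M \<and> esssup M (\<lambda>x. ereal \<bar>f x\<bar>) < \<infinity>"

definition Linfty_dist :: "'a measure \<Rightarrow> ('a \<Rightarrow> real) \<Rightarrow> ('a \<Rightarrow> real) \<Rightarrow> ereal" where
  "Linfty_dist M f g = esssup M (\<lambda>x. ereal \<bar>f x - g x\<bar>)"

definition is_version :: "'a measure \<Rightarrow> ('a \<Rightarrow> real) \<Rightarrow> ('a \<Rightarrow> real) \<Rightarrow> bool" where
  "is_version M u f \<longleftrightarrow> u \<in> borel_measurable M \<and> (AE x in M. u x = f x)"

end

theory Submission
  imports Defs
begin

text \<open>Take u(x) = sup {c. f \<ge> c a.e. on some ball around x}, the essential lower limit of f.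
  It is lower semicontinuous and dominates every lower semicontinuous g with g \<le> f a.e., which gives
  maximality; full support makes it bounded by the essential bounds of f. Separability reduces the
  balls in its definition to countably many, whence u \<le> f a.e.; and u dominates each u_n up to the
  uniform error, whence f \<le> u a.e.\<close>

definition ess_lower_bound_near :: "'a::metric_space measure \<Rightarrow> ('a \<Rightarrow> real) \<Rightarrow> 'a \<Rightarrow> real \<Rightarrow> bool" where
  "ess_lower_bound_near M f x c \<longleftrightarrow> (\<exists>r>0. AE y in M. y \<in> ball x r \<longrightarrow> c \<le> f y)"

definition ess_liminf :: "'a::metric_space measure \<Rightarrow> ('a \<Rightarrow> real) \<Rightarrow> 'a \<Rightarrow> real" where
  "ess_liminf M f x = Sup {c. ess_lower_bound_near M f x c}"

lemma ess_lower_bound_near_of_AE: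
  assumes "AE y in M. c \<le> f y"
  shows "ess_lower_bound_near M f x c"
  unfolding ess_lower_bound_near_def
  using assms by (auto intro!: exI[of _ 1] elim!: eventually_mono)

lemma ess_lower_bound_near_mono:
  assumes "ess_lower_bound_near M f x d" and "c \<le> d"
  shows "ess_lower_bound_near M f x c"
  using assms unfolding ess_lower_bound_near_def
  by (auto elim!: eventually_mono)

lemma ess_lower_bound_near_subset:
  assumes "AE y in M. y \<in> ball x r \<longrightarrow> c \<le> f y" and "ball z s \<subseteq> ball x r" and "s > 0"
  shows "ess_lower_bound_near M f z c"
  unfolding ess_lower_bound_near_def
  using assms by (intro exI[of _ s]) (auto elim!: eventually_mono)

lemma open_ess_lower_bound_near: "open {x. ess_lower_bound_near M f x c}"
  unfolding open_contains_ball
proof safe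
  fix x assume "ess_lower_bound_near M f x c"
  then obtain r where r: "r > 0" "AE y in M. y \<in> ball x r \<longrightarrow> c \<le> f y"
    by (auto simp: ess_lower_bound_near_def)
  have "ess_lower_bound_near M f z c" if "z \<in> ball x (r/2)" for z
  proof (rule ess_lower_bound_near_subset[OF r(2)])
    show "ball z (r/2) \<subseteq> ball x r"
    proof
      fix y assume "y \<in> ball z (r/2)"
      then show "y \<in> ball x r" using that dist_triangle[of x y z] by simp
    qed
  qed (use r in simp)
  then show "\<exists>e>0. ball x e \<subseteq> {x. ess_lower_bound_near M f x c}"
    using r(1) by (intro exI[of _ "r/2"]) auto
qed

text \<open>Every ball around x on which f \<ge> c a.e. contains a ball around x with centre in a countable
  dense set and rational radius; only countably many exceptional null sets arise this way.\<close>
lemma AE_ess_lower_bound_near_le: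
  fixes M :: "'a::metric_space measure"
  assumes "separable_space (euclidean :: 'a topology)"
  shows "AE x in M. ess_lower_bound_near M f x c \<longrightarrow> c \<le> f x"
proof -
  obtain D :: "'a set" where D: "countable D" "closure D = UNIV"
    using assms by (auto simp: separable_space_def)
  define B where "B = {(d, q). d \<in> D \<and> q \<in> \<rat> \<and> q > 0 \<and> (AE y in M. y \<in> ball d q \<longrightarrow> c \<le> f y)}"
  have "countable B"
    by (rule countable_subset[of _ "D \<times> \<rat>"]) (auto simp: B_def D(1) countable_rat)
  then have "AE x in M. \<forall>(d, q)\<in>B. x \<in> ball d q \<longrightarrow> c \<le> f x"
    by (subst AE_ball_countable) (auto simp: B_def)
  then show ?thesis
  proof eventually_elim
    case (elim x)
    show ?case
    proof
      assume "ess_lower_bound_near M f x c"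
      then obtain r where r: "r > 0" "AE y in M. y \<in> ball x r \<longrightarrow> c \<le> f y"
        by (auto simp: ess_lower_bound_near_def)
      obtain d where d: "d \<in> D" "dist x d < r/3"
        using closure_approachableD[of x D "r/3"] D(2) r(1) by auto
      obtain q where q: "q \<in> \<rat>" "r/3 < q" "q < 2*r/3"
        using Rats_dense_in_real[of "r/3" "2*r/3"] r(1) by auto
      have "ball d q \<subseteq> ball x r"
      proof
        fix y assume "y \<in> ball d q"
        then show "y \<in> ball x r" using d q dist_triangle[of x y d] by simp
      qed
      then have "AE y in M. y \<in> ball d q \<longrightarrow> c \<le> f y"
        using r(2) by (auto elim!: eventually_mono)
      then have "(d, q) \<in> B" using d q r(1) by (auto simp: B_def)
      moreover have "x \<in> ball d q" using d q by (simp add: dist_commute)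
      ultimately show "c \<le> f x" using elim by auto
    qed
  qed
qed

lemma lower_semicontinuous_add_const:
  assumes "lower_semicontinuous u"
  shows "lower_semicontinuous (\<lambda>x. u x + a)"
proof -
  have "{x. c < u x + a} = {x. c - a < u x}" for c by auto
  then show ?thesis using assms by (simp add: lower_semicontinuous_def)
qed

lemma lower_semicontinuous_borel_measurable:
  assumes "sets M = sets borel" and "lower_semicontinuous u"
  shows "u \<in> borel_measurable M"
proof -
  have "space M = UNIV" using sets_eq_imp_space_eq[OF assms(1)] by simp
  then show ?thesis
    unfolding borel_measurable_iff_greater
    using assms by (auto simp: lower_semicontinuous_def)
qed

lemma AE_le_if_AE_le_add_pos:
  fixes g h :: "'a \<Rightarrow> real"
  assumes "\<And>e. e > 0 \<Longrightarrow> AE x in M. g x \<le> h x + e"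
  shows "AE x in M. g x \<le> h x"
proof -
  have "AE x in M. \<forall>k::nat. g x \<le> h x + inverse (real (Suc k))"
    using assms by (simp add: AE_all_countable)
  then show ?thesis
  proof eventually_elim
    case (elim x)
    show ?case
    proof (rule field_le_epsilon)
      fix e :: real assume "e > 0"
      then obtain k where "inverse (real (Suc k)) < e"
        using reals_Archimedean by blast
      then show "g x \<le> h x + e" using elim[rule_format, of k] by linarith
    qed
  qed
qed

locale ess_bounded_on_full_support =
  fixes M :: "'a::metric_space measure" and f :: "'a \<Rightarrow> real" and K :: real
  assumes sets_eq_borel: "sets M = sets borel"
    and full_support: "\<And>U. open U \<Longrightarrow> U \<noteq> {} \<Longrightarrow> emeasure M U > 0"
    and ess_bounded: "AE x in M. \<bar>f x\<bar> \<le> K"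
begin

lemma not_AE_notin_ball:
  assumes "r > 0"
  shows "\<not> (AE y in M. y \<notin> ball x r)"
proof
  assume ae: "AE y in M. y \<notin> ball x r"
  have "space M = UNIV" using sets_eq_imp_space_eq[OF sets_eq_borel] by simp
  then have eq: "{y \<in> space M. \<not> y \<notin> ball x r} = ball x r" by (simp add: ball_def)
  have "ball x r \<in> sets M" using sets_eq_borel by simp
  from AE_iff_measurable[OF this eq] ae have "emeasure M (ball x r) = 0" by simp
  with full_support[of "ball x r"] assms show False by auto
qed

lemma ess_lower_bound_near_le_bound:
  assumes "ess_lower_bound_near M f x c"
  shows "c \<le> K"
proof (rule ccontr)
  assume "\<not> c \<le> K"
  obtain r where r: "r > 0" "AE y in M. y \<in> ball x r \<longrightarrow> c \<le> f y"
    using assms by (auto simp: ess_lower_bound_near_def)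
  have "AE y in M. y \<notin> ball x r"
    using r(2) ess_bounded by eventually_elim (use \<open>\<not> c \<le> K\<close> in auto)
  with not_AE_notin_ball r(1) show False by blast
qed

lemma ess_lower_bound_near_neg_bound: "ess_lower_bound_near M f x (- K)"
  by (rule ess_lower_bound_near_of_AE) (use ess_bounded in \<open>auto elim: eventually_mono\<close>)

lemma bdd_above_ess_lower_bounds_near: "bdd_above {c. ess_lower_bound_near M f x c}"
  using ess_lower_bound_near_le_bound by (auto simp: bdd_above_def)

lemma ess_liminf_upper:
  assumes "ess_lower_bound_near M f x c"
  shows "c \<le> ess_liminf M f x"
  unfolding ess_liminf_def
  by (rule cSup_upper) (use assms bdd_above_ess_lower_bounds_near in auto)

lemma less_ess_liminf_iff: "c < ess_liminf M f x \<longleftrightarrow> (\<exists>d>c. ess_lower_bound_near M f x d)"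
  unfolding ess_liminf_def
  using less_cSup_iff[of "{c. ess_lower_bound_near M f x c}" c]
    ess_lower_bound_near_neg_bound bdd_above_ess_lower_bounds_near
  by auto

lemma ess_lower_bound_near_if_less_ess_liminf:
  assumes "c < ess_liminf M f x"
  shows "ess_lower_bound_near M f x c"
  using assms ess_lower_bound_near_mono less_ess_liminf_iff by (meson less_imp_le)

lemma ess_liminf_le_bound: "ess_liminf M f x \<le> K"
  unfolding ess_liminf_def
  using ess_lower_bound_near_neg_bound ess_lower_bound_near_le_bound
  by (intro cSup_least) auto

lemma bounded_range_ess_liminf: "bounded (range (ess_liminf M f))"
proof -
  have "\<bar>ess_liminf M f x\<bar> \<le> K" for x
    using ess_liminf_le_bound ess_liminf_upper[OF ess_lower_bound_near_neg_bound, of x]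
    by (simp add: abs_le_iff)
  then show ?thesis by (auto simp: bounded_iff)
qed

lemma lower_semicontinuous_ess_liminf: "lower_semicontinuous (ess_liminf M f)"
proof -
  have "{x. c < ess_liminf M f x} = (\<Union>d\<in>{c<..}. {x. ess_lower_bound_near M f x d})" for c
    using less_ess_liminf_iff by auto
  then show ?thesis
    unfolding lower_semicontinuous_def by (simp add: open_UN open_ess_lower_bound_near)
qed

lemma ess_liminf_borel_measurable: "ess_liminf M f \<in> borel_measurable M"
  using lower_semicontinuous_borel_measurable[OF sets_eq_borel lower_semicontinuous_ess_liminf] .

lemma lower_semicontinuous_le_ess_liminf:
  assumes "lower_semicontinuous g" and "AE y in M. g y \<le> f y"
  shows "g x \<le> ess_liminf M f x"
proof (rule dense_le)
  fix c assume "c < g x"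
  moreover have "open {y. c < g y}" using assms(1) by (auto simp: lower_semicontinuous_def)
  ultimately obtain r where r: "r > 0" "ball x r \<subseteq> {y. c < g y}"
    by (auto simp: open_contains_ball)
  have "AE y in M. y \<in> ball x r \<longrightarrow> c \<le> f y"
    using assms(2) by eventually_elim (use r in auto)
  then show "c \<le> ess_liminf M f x"
    using r(1) by (intro ess_liminf_upper) (auto simp: ess_lower_bound_near_def)
qed

lemma ess_liminf_AE_le:
  assumes "separable_space (euclidean :: 'a topology)"
  shows "AE x in M. ess_liminf M f x \<le> f x"
proof -
  have "AE x in M. \<forall>c\<in>\<rat>. ess_lower_bound_near M f x c \<longrightarrow> c \<le> f x"
    using AE_ess_lower_bound_near_le[OF assms] by (subst AE_ball_countable) (auto simp: countable_rat)
  then show ?thesis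
  proof eventually_elim
    case (elim x)
    show ?case
    proof (rule ccontr)
      assume "\<not> ess_liminf M f x \<le> f x"
      then obtain c where "c \<in> \<rat>" "f x < c" "c < ess_liminf M f x"
        using Rats_dense_in_real[of "f x" "ess_liminf M f x"] by auto
      with elim ess_lower_bound_near_if_less_ess_liminf show False by force
    qed
  qed
qed

lemma AE_le_ess_liminf:
  assumes "\<And>e. e > 0 \<Longrightarrow> \<exists>g. lower_semicontinuous g \<and> (AE x in M. \<bar>g x - f x\<bar> < e)"
  shows "AE x in M. f x \<le> ess_liminf M f x"
proof (rule AE_le_if_AE_le_add_pos)
  fix e :: real assume "e > 0"
  then obtain g where g: "lower_semicontinuous g" "AE x in M. \<bar>g x - f x\<bar> < e/2"
    using assms[of "e/2"] by auto
  have "AE y in M. g y + - (e/2) \<le> f y" using g(2) by eventually_elim (smt (verit))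
  then have le: "g x + - (e/2) \<le> ess_liminf M f x" for x
    by (rule lower_semicontinuous_le_ess_liminf[OF lower_semicontinuous_add_const[OF g(1)]])
  show "AE x in M. f x \<le> ess_liminf M f x + e"
    using g(2)
  proof eventually_elim
    case (elim x)
    then show ?case using le[of x] by linarith
  qed
qed

end

lemma Linfty_AE_abs_le:
  assumes "Linfty M f"
  obtains K where "AE x in M. \<bar>f x\<bar> \<le> K"
proof -
  let ?E = "esssup M (\<lambda>x. ereal \<bar>f x\<bar>)"
  have "?E < \<infinity>" using assms by (simp add: Linfty_def)
  then obtain K where K: "?E \<le> ereal K" by (cases ?E) auto
  have "AE x in M. ereal \<bar>f x\<bar> \<le> ?E" by (rule esssup_AE)
  then have "AE x in M. \<bar>f x\<bar> \<le> K"
    by eventually_elim (metis K ereal_less_eq(3) order.trans)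
  then show thesis by (rule that)
qed

lemma AE_abs_diff_less_if_Linfty_dist_less:
  assumes "Linfty_dist M g f < ereal e"
  shows "AE x in M. \<bar>g x - f x\<bar> < e"
  using esssup_AE[of "\<lambda>x. ereal \<bar>g x - f x\<bar>" M] unfolding Linfty_dist_def[symmetric]
  by eventually_elim (metis assms ereal_less_eq(3) le_less_trans less_ereal.simps(1))

lemma Linfty_tendsto_versions_AE_approx:
  assumes "(\<lambda>n. Linfty_dist M (fs n) f) \<longlonglongrightarrow> 0"
    and "\<And>n. is_version M (us n) (fs n)"
    and "e > 0"
  shows "\<exists>n. AE x in M. \<bar>us n x - f x\<bar> < e"
proof -
  obtain n where "Linfty_dist M (fs n) f < ereal e"
    using order_tendstoD(2)[OF assms(1), of "ereal e"] assms(3)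
    by (auto simp: eventually_sequentially)
  then have "AE x in M. \<bar>fs n x - f x\<bar> < e"
    by (rule AE_abs_diff_less_if_Linfty_dist_less)
  moreover have "AE x in M. us n x = fs n x" using assms(2) by (auto simp: is_version_def)
  ultimately show ?thesis by (intro exI[of _ n]) (auto elim: AE_mp)
qed

theorem mainTheorem19:
  fixes M :: "'a::metric_space measure"
    and fs :: "nat \<Rightarrow> 'a \<Rightarrow> real" and f :: "'a \<Rightarrow> real"
    and us :: "nat \<Rightarrow> 'a \<Rightarrow> real"
  assumes separable: "separable_space (euclidean :: 'a topology)"
    and borel_sets: "sets M = sets borel"
    and sigma_finite: "sigma_finite_measure M"
    and full_support: "\<And>U. open U \<Longrightarrow> U \<noteq> {} \<Longrightarrow> emeasure M U > 0"
    and fs_Linfty: "\<And>n. Linfty M (fs n)"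
    and f_Linfty: "Linfty M f"
    and conv: "(\<lambda>n. Linfty_dist M (fs n) f) \<longlonglongrightarrow> 0"
    and us_version: "\<And>n. is_version M (us n) (fs n)"
    and us_bounded: "\<And>n. bounded (range (us n))"
    and us_nonneg: "\<And>n x. 0 \<le> us n x"
    and us_lsc: "\<And>n. lower_semicontinuous (us n)"
  shows "\<exists>u. is_version M u f \<and> bounded (range u) \<and> (\<forall>x. 0 \<le> u x) \<and> lower_semicontinuous u
           \<and> (\<forall>v. is_version M v f \<and> bounded (range v) \<and> (\<forall>x. 0 \<le> v x) \<and> lower_semicontinuous v
                  \<longrightarrow> (\<forall>x. v x \<le> u x))"
proof -
  obtain K where K: "AE x in M. \<bar>f x\<bar> \<le> K" using f_Linfty by (rule Linfty_AE_abs_le)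
  interpret ess_bounded_on_full_support M f K
    using borel_sets full_support K by unfold_locales
  note approx = Linfty_tendsto_versions_AE_approx[OF conv us_version]
  have "AE x in M. 0 \<le> f x"
  proof (rule AE_le_if_AE_le_add_pos)
    fix e :: real assume "e > 0"
    then obtain n where "AE x in M. \<bar>us n x - f x\<bar> < e" using approx by blast
    then show "AE x in M. 0 \<le> f x + e"
      by eventually_elim (smt (verit) us_nonneg[of n])
  qed
  then have u_nonneg: "0 \<le> ess_liminf M f x" for x
    by (intro ess_liminf_upper ess_lower_bound_near_of_AE)
  have "AE x in M. f x \<le> ess_liminf M f x"
    by (rule AE_le_ess_liminf) (use approx us_lsc in blast)
  with ess_liminf_AE_le[OF separable] have "AE x in M. ess_liminf M f x = f x"
    by eventually_elim simp
  then have "is_version M (ess_liminf M f) f"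
    by (simp add: is_version_def ess_liminf_borel_measurable)
  moreover have "v x \<le> ess_liminf M f x" if "is_version M v f" "lower_semicontinuous v" for v x
    using that by (intro lower_semicontinuous_le_ess_liminf) (auto simp: is_version_def elim: AE_mp)
  ultimately show ?thesis
    using bounded_range_ess_liminf u_nonneg lower_semicontinuous_ess_liminf by blast
qed

end
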